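(* Let $\Sigma$ be a finite totally ordered alphabet, let $W = a_1\cdots a_n \in \Sigma^+$ have Lyndon factorization $W = L_1 L_2 \cdots L_k$, and let $1 \le l < k$, $m = |L_1 \cdots L_l|$. Let $sort(L_1\cdots L_l)$ be the list of positions $1,\dots,m$ sorted by the lexicographic order of the suffixes $W[i,m]$ of $L_1\cdots L_l$, let $sort(L_{l+1}\cdots L_k)$ be the list of positions $m+1,\dots,n$ sorted by the lexicographic order of the suffixes $W[i,n]$ of $L_{l+1}\cdots L_k$, and let $sort(L_1\cdots L_k)$ be the list of positions $1,\dots,n$ sorted by the lexicographic order of the suffixes $W[i,n]$ of $W$. Then $sort(L_1 \cdots L_k) = merge(sort(L_1\cdots L_l), sort(L_{l+1}\cdots L_k))$, where the merge compares positions by the lexicographic order of the corresponding suffixes of $W$.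
   Context: $W[i,j] = a_i \cdots a_j$. The lexicographic order is the usual one, with a proper prefix smaller than the longer word. A Lyndon word is a nonempty primitive word strictly smaller than all its other cyclic shifts (conjugates). The Lyndon factorization of $W$ is the unique factorization $W = L_1\cdots L_k$ into Lyndon words with $L_1 \ge \cdots \ge L_k$ lexicographically. If $l_1, l_2$ are two sorted lists of elements of a totally ordered set, $merge(l_1,l_2)$ is the sorted list of all elements of $l_1$ and $l_2$. *)

theory Defs
  imports Main
begin

definition lex_less :: "'a::linorder list \<Rightarrow> 'a list \<Rightarrow> bool" where
  "lex_less u v \<longleftrightarrow> (u, v) \<in> lexord {(a, b). a < b}"

definition lex_le :: "'a::linorder list \<Rightarrow> 'a list \<Rightarrow> bool" where
  "lex_le u v \<longleftrightarrow> u = v \<or> lex_less u v"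

definition primitive :: "'a list \<Rightarrow> bool" where
  "primitive w \<longleftrightarrow> \<not> (\<exists>u k. 2 \<le> k \<and> w = concat (replicate k u))"

definition lyndon :: "'a::linorder list \<Rightarrow> bool" where
  "lyndon w \<longleftrightarrow> w \<noteq> [] \<and> primitive w \<and>
     (\<forall>i. 0 < i \<and> i < length w \<longrightarrow> lex_less w (rotate i w))"

definition lyndon_factorization :: "'a::linorder list list \<Rightarrow> 'a list \<Rightarrow> bool" where
  "lyndon_factorization Ls W \<longleftrightarrow> concat Ls = W \<and> (\<forall>L\<in>set Ls. lyndon L) \<and>
     sorted_wrt (\<lambda>x y. lex_le y x) Ls"

fun insort_by :: "('b \<Rightarrow> 'b \<Rightarrow> bool) \<Rightarrow> 'b \<Rightarrow> 'b list \<Rightarrow> 'b list" where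
  "insort_by lt x [] = [x]"
| "insort_by lt x (y # ys) = (if lt x y then x # y # ys else y # insort_by lt x ys)"

definition sort_by :: "('b \<Rightarrow> 'b \<Rightarrow> bool) \<Rightarrow> 'b list \<Rightarrow> 'b list" where
  "sort_by lt xs = foldr (insort_by lt) xs []"

fun merge_by :: "('b \<Rightarrow> 'b \<Rightarrow> bool) \<Rightarrow> 'b list \<Rightarrow> 'b list \<Rightarrow> 'b list" where
  "merge_by lt [] ys = ys"
| "merge_by lt xs [] = xs"
| "merge_by lt (x # xs) (y # ys) =
     (if lt x y then x # merge_by lt xs (y # ys) else y # merge_by lt (x # xs) ys)"

text \<open>1-based factor W[i,j] = a_i ... a_j.\<close>
definition factor :: "'a list \<Rightarrow> nat \<Rightarrow> nat \<Rightarrow> 'a list" where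
  "factor W i j = take (j + 1 - i) (drop (i - 1) W)"

end

theory Submission
  imports Defs "HOL-Library.Sublist"
begin

text \<open>
  Write \<open>W = S V\<close> with \<open>S = L\<^sub>1\<cdots>L\<^sub>l\<close> and \<open>V = L\<^sub>l\<^sub>+\<^sub>1\<cdots>L\<^sub>k\<close>.
  A Lyndon word is not larger than any of its nonempty suffixes, and the factors are
  nonincreasing; by induction over the factors of \<open>V\<close> this gives \<open>V < x V\<close> for every
  nonempty suffix \<open>x\<close> of \<open>S\<close>. Consequently appending \<open>V\<close> does not change the relative
  order of two suffixes of \<open>S\<close>: if one is a proper prefix \<open>a\<close> of the other \<open>a x\<close>, then
  \<open>a V < a x V\<close>. So the positions in \<open>S\<close>, sorted as in \<open>S\<close>, are already sorted as
  positions of \<open>W\<close>, and the merge of two sorted lists of distinct positions under the strict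
  total order of the suffixes of \<open>W\<close> is the unique sorted list of all positions.
\<close>

lemma lex_less_eq_lexordp: "lex_less = ord_class.lexordp"
  by (simp add: lex_less_def lexordp_conv_lexord fun_eq_iff)

lemma lex_le_eq_lexordp_eq: "lex_le = ord_class.lexordp_eq"
  by (auto simp: lex_le_def lex_less_eq_lexordp lexordp_eq_conv_lexord fun_eq_iff)

lemma lex_less_append_same_length:
  "lex_less u v \<Longrightarrow> length u = length v \<Longrightarrow> lex_less (u @ x) (v @ y)"
  by (simp add: lex_less_def lexord_sufI)

lemma lex_le_append_right: "lex_le u v \<Longrightarrow> lex_le u (v @ w)"
  unfolding lex_le_eq_lexordp_eq by (induction rule: lexordp_eq.induct) auto

lemma lex_less_asym: "lex_less u v \<Longrightarrow> \<not> lex_less v u"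
  unfolding lex_less_eq_lexordp using lexordp_antisym by blast

lemma lyndon_le_suffix:
  assumes "lyndon P" and "suffix y P" and "y \<noteq> []"
  shows "lex_le P y"
proof -
  obtain u where P: "P = u @ y" using \<open>suffix y P\<close> by (auto simp: suffix_def)
  have less_rotate: "lex_less P (z @ x)" if "P = x @ z" "x \<noteq> []" "z \<noteq> []" for x z
  proof -
    have "0 < length x" "length x < length P" using that by auto
    then have "lex_less P (rotate (length x) P)" using \<open>lyndon P\<close> unfolding lyndon_def by blast
    moreover have "rotate (length x) P = z @ x" using that by (simp add: rotate_drop_take)
    ultimately show ?thesis by simp
  qed
  show ?thesis
  proof (cases "u = []")
    case True
    then show ?thesis using P by (simp add: lex_le_def)
  next
    case False
    have "lex_less P (y @ u)" using less_rotate[OF P False \<open>y \<noteq> []\<close>] .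
    moreover have "\<not> lex_less y P"
    proof
      assume "lex_less y P"
      then consider (prefix) c v where "P = y @ c # v"
        | (mismatch) p a b s t where "a < b" "y = p @ a # s" "P = p @ b # t"
        unfolding lex_less_eq_lexordp lexordp_iff by blast
      then show False
      proof cases
        case prefix
        \<comment> \<open>The rotations \<open>y u\<close> and \<open>v y\<close> of \<open>P = u y = y v\<close> compare \<open>u\<close> and \<open>v\<close> in opposite directions.\<close>
        have "lex_less (c # v) u"
          using \<open>lex_less P (y @ u)\<close> prefix
          unfolding lex_less_eq_lexordp by (simp add: lexordp_append_leftD)
        moreover have "length (c # v) = length u"
          using arg_cong[where f=length, OF trans[OF P[symmetric] prefix]] by simp
        ultimately have "lex_less ((c # v) @ y) (u @ y)" by (rule lex_less_append_same_length)
        moreover have "lex_less P ((c # v) @ y)" using less_rotate prefix \<open>y \<noteq> []\<close> by blast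
        then have "lex_less (u @ y) ((c # v) @ y)" unfolding P .
        ultimately show False using lex_less_asym by blast
      next
        case mismatch
        then have "lex_less (y @ u) P"
          unfolding lex_less_eq_lexordp by (simp add: lexordp_append_left_rightI)
        then show False using \<open>lex_less P (y @ u)\<close> lex_less_asym by blast
      qed
    qed
    ultimately show ?thesis
      using lexordp_linear[of y P] by (auto simp: lex_le_def lex_less_eq_lexordp)
  qed
qed

lemma lex_le_suffix_concat_lyndon:
  assumes "\<forall>P\<in>set Ps. lyndon P \<and> lex_le L P" and "suffix x (concat Ps)" and "x \<noteq> []"
  shows "lex_le L x"
  using assms
proof (induction Ps)
  case Nil
  then show ?case by simp
next
  case (Cons P Ps)
  have "suffix x (P @ concat Ps)" using Cons.prems(2) by simp
  then consider "suffix x (concat Ps)" | x' where "x = x' @ concat Ps" "suffix x' P" "x' \<noteq> []"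
    unfolding suffix_append by fastforce
  then show ?case
  proof cases
    case 1
    then show ?thesis using Cons.IH Cons.prems(1,3) by simp
  next
    case 2
    then have "lex_le L P" "lex_le P x'" using Cons.prems(1) lyndon_le_suffix by auto
    then have "lex_le L x'" unfolding lex_le_eq_lexordp_eq by (rule lexordp_eq_trans)
    then show ?thesis using 2 lex_le_append_right by blast
  qed
qed

lemma lex_less_lyndon_tail:
  assumes "sorted_wrt (\<lambda>x y. lex_le y x) (Ps @ Rs)" and "\<forall>L\<in>set (Ps @ Rs). lyndon L"
    and "suffix x (concat Ps)" and "x \<noteq> []"
  shows "lex_less (concat Rs) (x @ concat Rs)"
  using assms
proof (induction Rs arbitrary: Ps x)
  case Nil
  then show ?case by (cases x) (simp_all add: lex_less_eq_lexordp)
next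
  case (Cons L Rs)
  have "\<forall>P\<in>set Ps. lyndon P \<and> lex_le L P"
    using Cons.prems(1,2) by (auto simp: sorted_wrt_append)
  then have "lex_le L x" using Cons.prems(3,4) by (rule lex_le_suffix_concat_lyndon)
  then consider (prefix) t where "x = L @ t"
    | (mismatch) p a b s t where "a < b" "L = p @ a # s" "x = p @ b # t"
    unfolding lex_le_def lex_less_eq_lexordp lexordp_iff by auto
  then show ?case
  proof cases
    case prefix
    have "L \<noteq> []" using Cons.prems(2) by (auto simp: lyndon_def)
    have "lex_less (concat Rs) ((t @ L) @ concat Rs)"
    proof (rule Cons.IH)
      show "sorted_wrt (\<lambda>x y. lex_le y x) ((Ps @ [L]) @ Rs)" using Cons.prems(1) by simp
      show "\<forall>L'\<in>set ((Ps @ [L]) @ Rs). lyndon L'" using Cons.prems(2) by auto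
      show "suffix (t @ L) (concat (Ps @ [L]))" using Cons.prems(3) prefix by (auto simp: suffix_def)
      show "t @ L \<noteq> []" using \<open>L \<noteq> []\<close> by simp
    qed
    then have "lex_less (L @ concat Rs) (L @ (t @ L) @ concat Rs)"
      unfolding lex_less_eq_lexordp by (rule lexordp_append_leftI)
    then show ?thesis using prefix by simp
  next
    case mismatch
    then show ?thesis
      unfolding lex_less_eq_lexordp by (simp add: lexordp_append_left_rightI)
  qed
qed

lemma lex_less_append_tail:
  assumes tail: "\<And>x. suffix x S \<Longrightarrow> x \<noteq> [] \<Longrightarrow> lex_less V (x @ V)"
    and "suffix b S" and "lex_less a b"
  shows "lex_less (a @ V) (b @ V)"
proof -
  from \<open>lex_less a b\<close> consider (prefix) c w where "b = a @ c # w"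
    | (mismatch) p x y s t where "x < y" "a = p @ x # s" "b = p @ y # t"
    unfolding lex_less_eq_lexordp lexordp_iff by blast
  then show ?thesis
  proof cases
    case prefix
    then have "suffix (c # w) S" using \<open>suffix b S\<close> suffix_appendD by blast
    then have "lex_less V ((c # w) @ V)" using tail by blast
    then have "lex_less (a @ V) (a @ (c # w) @ V)"
      unfolding lex_less_eq_lexordp by (rule lexordp_append_leftI)
    then show ?thesis using prefix by simp
  next
    case mismatch
    then show ?thesis
      unfolding lex_less_eq_lexordp by (simp add: lexordp_append_left_rightI)
  qed
qed

lemma set_insort_by [simp]: "set (insort_by lt x ys) = insert x (set ys)"
  by (induction ys) auto

lemma sort_by_simps [simp]:
  "sort_by lt [] = []"
  "sort_by lt (x # xs) = insort_by lt x (sort_by lt xs)"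
  by (simp_all add: sort_by_def)

lemma set_sort_by [simp]: "set (sort_by lt xs) = set xs"
  by (induction xs) auto

lemma set_merge_by [simp]: "set (merge_by lt xs ys) = set xs \<union> set ys"
  by (induction lt xs ys rule: merge_by.induct) auto

lemma insort_by_cong:
  "(\<And>y. y \<in> set ys \<Longrightarrow> lt x y = lt' x y) \<Longrightarrow> insort_by lt x ys = insort_by lt' x ys"
  by (induction ys) auto

lemma sort_by_cong:
  "(\<And>x y. x \<in> set xs \<Longrightarrow> y \<in> set xs \<Longrightarrow> lt x y = lt' x y) \<Longrightarrow> sort_by lt xs = sort_by lt' xs"
  by (induction xs) (auto intro!: insort_by_cong)

lemma sorted_wrt_Cons_lower_bound:
  assumes "transp_on A lt" and "sorted_wrt lt (y # ys)" and "lt x y"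
    and "x \<in> A" and "set (y # ys) \<subseteq> A"
  shows "\<forall>z\<in>set (y # ys). lt x z"
  using assms by (auto intro: transp_onD)

lemma sorted_wrt_insort_by:
  assumes "transp_on (insert x (set ys)) lt" and "totalp_on (insert x (set ys)) lt"
    and "x \<notin> set ys" and "sorted_wrt lt ys"
  shows "sorted_wrt lt (insort_by lt x ys)"
  using assms
proof (induction ys)
  case Nil
  then show ?case by simp
next
  case (Cons y ys)
  have IH: "sorted_wrt lt (insort_by lt x ys)"
    using Cons by (auto intro: transp_on_subset totalp_on_subset)
  show ?case
  proof (cases "lt x y")
    case True
    have "\<forall>z\<in>set (y # ys). lt x z"
      using Cons.prems True by (intro sorted_wrt_Cons_lower_bound[where A="insert x (set (y # ys))"]) auto
    then show ?thesis using True Cons.prems(4) by simp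
  next
    case False
    then have "lt y x" using Cons.prems(2,3) by (auto dest: totalp_onD)
    then show ?thesis using False IH Cons.prems(4) by simp
  qed
qed

lemma sorted_wrt_sort_by:
  "transp_on (set xs) lt \<Longrightarrow> totalp_on (set xs) lt \<Longrightarrow> distinct xs \<Longrightarrow> sorted_wrt lt (sort_by lt xs)"
proof (induction xs)
  case (Cons x xs)
  then have "sorted_wrt lt (sort_by lt xs)" by (auto intro: transp_on_subset totalp_on_subset)
  then show ?case using Cons.prems by (simp add: sorted_wrt_insort_by)
qed simp

lemma sorted_wrt_merge_by:
  assumes "transp_on (set xs \<union> set ys) lt" and "totalp_on (set xs \<union> set ys) lt"
    and "set xs \<inter> set ys = {}" and "sorted_wrt lt xs" and "sorted_wrt lt ys"
  shows "sorted_wrt lt (merge_by lt xs ys)"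
  using assms
proof (induction lt xs ys rule: merge_by.induct)
  case (3 lt x xs y ys)
  show ?case
  proof (cases "lt x y")
    case True
    have "sorted_wrt lt (merge_by lt xs (y # ys))"
      using "3.IH"(1)[OF True] "3.prems" by (auto intro: transp_on_subset totalp_on_subset)
    then show ?thesis
      using True "3.prems" sorted_wrt_Cons_lower_bound[of _ lt y ys x] by auto
  next
    case False
    then have "lt y x" using "3.prems"(2,3) by (auto dest: totalp_onD)
    have "sorted_wrt lt (merge_by lt (x # xs) ys)"
      using "3.IH"(2)[OF False] "3.prems" by (auto intro: transp_on_subset totalp_on_subset)
    then show ?thesis
      using False \<open>lt y x\<close> "3.prems" sorted_wrt_Cons_lower_bound[of _ lt x xs y] by auto
  qed
qed simp_all

lemma sorted_wrt_unique:
  assumes "transp_on (set xs) lt" and "irreflp_on (set xs) lt"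
    and "sorted_wrt lt xs" and "sorted_wrt lt ys" and "set xs = set ys"
  shows "xs = ys"
  using assms
proof (induction xs arbitrary: ys)
  case Nil
  then show ?case by simp
next
  case (Cons x xs)
  then obtain y ys' where ys: "ys = y # ys'" by (cases ys) auto
  have "x = y"
  proof (rule ccontr)
    assume "x \<noteq> y"
    then have "lt x y" "lt y x" using Cons.prems(3-5) ys by auto
    then show False
      using Cons.prems(1,2,5) ys by (auto dest: transp_onD irreflp_onD)
  qed
  moreover have "x \<notin> set xs" "y \<notin> set ys'"
    using Cons.prems(2-5) ys \<open>x = y\<close> by (auto dest: irreflp_onD)
  ultimately have "set xs = set ys'" using Cons.prems(5) ys by auto
  then have "xs = ys'"
    using Cons ys by (auto intro: transp_on_subset irreflp_on_subset)
  then show ?case using ys \<open>x = y\<close> by simp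
qed

lemma sort_by_eq_merge_by:
  assumes "transp_on (set zs) lt" and "totalp_on (set zs) lt" and "irreflp_on (set zs) lt"
    and "distinct zs" and "set zs = set xs \<union> set ys" and "set xs \<inter> set ys = {}"
    and "sorted_wrt lt xs" and "sorted_wrt lt ys"
  shows "sort_by lt zs = merge_by lt xs ys"
proof (rule sorted_wrt_unique)
  show "sorted_wrt lt (sort_by lt zs)" using assms(1,2,4) by (rule sorted_wrt_sort_by)
  show "sorted_wrt lt (merge_by lt xs ys)"
    using assms(1,2,5-8) by (intro sorted_wrt_merge_by) simp_all
qed (use assms in simp_all)

text \<open>Positions are 1-based, as in \<open>factor\<close>.\<close>

definition suffix_less :: "'a::linorder list \<Rightarrow> nat \<Rightarrow> nat \<Rightarrow> bool" where
  "suffix_less w i j \<longleftrightarrow> lex_less (drop (i - 1) w) (drop (j - 1) w)"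

lemma factor_eq_drop: "factor W i (length W) = drop (i - 1) W"
  by (simp add: factor_def)

lemma factor_eq_drop_take: "1 \<le> i \<Longrightarrow> factor W i m = drop (i - 1) (take m W)"
  by (cases "i \<le> m + 1") (simp_all add: factor_def take_drop)

lemma transp_on_suffix_less: "transp_on A (suffix_less w)"
  unfolding suffix_less_def lex_less_eq_lexordp by (auto intro: transp_onI lexordp_trans)

lemma irreflp_on_suffix_less: "irreflp_on A (suffix_less w)"
  by (simp add: irreflp_on_def suffix_less_def lex_less_eq_lexordp lexordp_irreflexive')

lemma totalp_on_suffix_less: "totalp_on {1..length w} (suffix_less w)"
proof (rule totalp_onI)
  fix i j assume "i \<in> {1..length w}" "j \<in> {1..length w}" "i \<noteq> j"
  then have "length (drop (i - 1) w) \<noteq> length (drop (j - 1) w)" by auto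
  then have "drop (i - 1) w \<noteq> drop (j - 1) w" by metis
  then show "suffix_less w i j \<or> suffix_less w j i"
    unfolding suffix_less_def lex_less_eq_lexordp using lexordp_linear by blast
qed

lemma suffix_less_append:
  assumes "\<And>x. suffix x S \<Longrightarrow> x \<noteq> [] \<Longrightarrow> lex_less V (x @ V)"
    and "i \<le> length S + 1" and "j \<le> length S + 1" and "suffix_less S i j"
  shows "suffix_less (S @ V) i j"
proof -
  have "lex_less (drop (i - 1) S @ V) (drop (j - 1) S @ V)"
    using assms(4) unfolding suffix_less_def by (intro lex_less_append_tail[OF assms(1) suffix_drop])
  then show ?thesis using assms(2,3) by (simp add: suffix_less_def)
qed

lemma sort_by_suffix_less_append:
  assumes tail: "\<And>x. suffix x S \<Longrightarrow> x \<noteq> [] \<Longrightarrow> lex_less V (x @ V)"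
  defines "m \<equiv> length S" and "n \<equiv> length (S @ V)"
  shows "sort_by (suffix_less (S @ V)) [1..<n+1] =
         merge_by (suffix_less (S @ V))
           (sort_by (suffix_less S) [1..<m+1]) (sort_by (suffix_less (S @ V)) [m+1..<n+1])"
proof -
  have positions: "set [1..<k+1] = {1..k}" for k :: nat by auto
  have total: "totalp_on {1..n} (suffix_less (S @ V))"
    unfolding n_def by (rule totalp_on_suffix_less)
  have "sorted_wrt (suffix_less S) (sort_by (suffix_less S) [1..<m+1])"
    by (rule sorted_wrt_sort_by)
      (unfold positions m_def, rule transp_on_suffix_less, rule totalp_on_suffix_less, simp)
  then have sorted_left: "sorted_wrt (suffix_less (S @ V)) (sort_by (suffix_less S) [1..<m+1])"
    by (rule sorted_wrt_mono_rel[rotated]) (auto simp: m_def intro: suffix_less_append tail)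
  have sorted_right: "sorted_wrt (suffix_less (S @ V)) (sort_by (suffix_less (S @ V)) [m+1..<n+1])"
    by (rule sorted_wrt_sort_by) (auto simp: transp_on_suffix_less intro: totalp_on_subset[OF total])
  show ?thesis
  proof (rule sort_by_eq_merge_by)
    show "totalp_on (set [1..<n+1]) (suffix_less (S @ V))" unfolding positions by (rule total)
    show "set [1..<n+1] =
        set (sort_by (suffix_less S) [1..<m+1]) \<union> set (sort_by (suffix_less (S @ V)) [m+1..<n+1])"
      by (auto simp: m_def n_def)
  qed (fact sorted_left sorted_right transp_on_suffix_less irreflp_on_suffix_less | fastforce)+
qed

theorem proposition1:
  fixes W :: "'a::{linorder, finite} list"
    and Ls :: "'a list list"
    and l :: nat
  assumes "W \<noteq> []"
    and "lyndon_factorization Ls W"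
    and "1 \<le> l" and "l < length Ls"
  defines "n \<equiv> length W"
    and "m \<equiv> length (concat (take l Ls))"
  shows "sort_by (\<lambda>i j. lex_less (factor W i n) (factor W j n)) [1..<n+1] =
         merge_by (\<lambda>i j. lex_less (factor W i n) (factor W j n))
           (sort_by (\<lambda>i j. lex_less (factor W i m) (factor W j m)) [1..<m+1])
           (sort_by (\<lambda>i j. lex_less (factor W i n) (factor W j n)) [m+1..<n+1])"
proof -
  define S V where "S = concat (take l Ls)" and "V = concat (drop l Ls)"
  have W: "W = S @ V"
    using assms(2) unfolding lyndon_factorization_def S_def V_def
    by (metis append_take_drop_id concat_append)
  have m: "m = length S" by (simp add: S_def m_def)
  have tail: "lex_less V (x @ V)" if "suffix x S" "x \<noteq> []" for x
    using assms(2) that unfolding lyndon_factorization_def S_def V_def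
    by (intro lex_less_lyndon_tail[of "take l Ls"]) simp_all
  have less_n: "(\<lambda>i j. lex_less (factor W i n) (factor W j n)) = suffix_less W"
    by (simp add: n_def factor_eq_drop suffix_less_def fun_eq_iff)
  have less_m: "sort_by (\<lambda>i j. lex_less (factor W i m) (factor W j m)) [1..<m+1] =
      sort_by (suffix_less S) [1..<m+1]"
    by (rule sort_by_cong) (auto simp: factor_eq_drop_take suffix_less_def W m)
  show ?thesis
    unfolding less_n less_m unfolding n_def m W by (rule sort_by_suffix_less_append[OF tail])
qed

end
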